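(* For an integer $p\ge 0$ and a complex number $z$ with $0<|z|<1$, let $$F(z,p)=\sum_{k=1}^\infty \frac{z^{2k}}{(2k-1)(2k)^p(2k+1)}.$$ Then, if $p$ is even, $$F(z,p)=\frac12\left(\Big(z-\frac1z\Big)\operatorname{arctanh}(z)+1-\sum_{j=1}^{p/2}2^{-(2j-1)}\operatorname{Li}_{2j}(z^2)\right),$$ and, if $p$ is odd, $$F(z,p)=\frac12\left(\Big(z+\frac1z\Big)\operatorname{arctanh}(z)-1+\ln(1-z^2)-\sum_{j=1}^{(p-1)/2}2^{-2j}\operatorname{Li}_{2j+1}(z^2)\right).$$ (Empty sums are $0$.)
   Context: $\operatorname{arctanh}(z)=\int_0^z\frac{dt}{1-t^2}=\frac12\ln\frac{1+z}{1-z}=\sum_{k\ge1}\frac{z^{2k-1}}{2k-1}$ for $|z|<1$ (principal branch of $\ln$). The polylogarithm is $\operatorname{Li}_n(z)=\sum_{k=1}^\infty z^k/k^n$ for $|z|<1$. *)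

theory Defs
  imports "HOL-Analysis.Analysis"
begin

text \<open>Polylogarithm, defined by its power series (meaningful for norm z < 1).\<close>
definition polylog :: "nat \<Rightarrow> complex \<Rightarrow> complex" where
  "polylog n z = (\<Sum>k. z ^ (Suc k) / of_nat (Suc k) ^ n)"

definition F :: "complex \<Rightarrow> nat \<Rightarrow> complex" where
  "F z p = (\<Sum>k. z ^ (2 * Suc k) /
      (of_nat (2 * Suc k - 1) * of_nat (2 * Suc k) ^ p * of_nat (2 * Suc k + 1)))"

end

(*
  With n = 2k + 2 the weight of z^n in F(z,p) is 1/((n - 1) n^p (n + 1)), and since
  (n - 1)(n + 1) = n^2 - 1 it obeys 1/((n - 1) n^(p+2) (n + 1)) = 1/((n - 1) n^p (n + 1)) - 1/n^(p+2).
  Summing over k gives F(z, p + 2) = F(z, p) - 2^-(p+2) Li_(p+2)(z^2), which reduces the claim to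
  p = 0 and p = 1.  There partial fractions split the summand into the odd series
  z^(2k+1)/(2k+1) of artanh z (multiplied by z, or shifted by one index and divided by z) and,
  for p = 1, the series of Li_1(z^2) = -ln(1 - z^2).
*)
theory Submission
  imports Defs
begin

lemma Ln_divide_Re_pos:
  fixes w v :: complex
  assumes "0 < Re w" "0 < Re v"
  shows "Ln (w / v) = Ln w - Ln v"
proof -
  have v: "v \<notin> \<real>\<^sub>\<le>\<^sub>0" using assms(2) by (auto simp: complex_nonpos_Reals_iff)
  have "Ln (w * inverse v) = Ln w + Ln (inverse v)"
    using Re_Ln_pos_lt_imp[OF assms(1)] Re_Ln_pos_lt_imp[OF assms(2)] assms
    by (intro Ln_times_simple) (auto simp: Ln_inverse[OF v])
  then show ?thesis by (simp add: divide_inverse Ln_inverse[OF v])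
qed

lemma artanh_eq_Ln_diff:
  fixes z :: complex
  assumes "norm z < 1"
  shows "artanh z = (Ln (1 + z) - Ln (1 - z)) / 2"
proof -
  have "0 < Re (1 + z)" "0 < Re (1 - z)"
    using assms abs_Re_le_cmod[of z] by auto
  then show ?thesis by (simp add: artanh_def Ln_divide_Re_pos)
qed

lemma artanh_series:
  fixes z :: complex
  assumes "norm z < 1"
  shows "(\<lambda>k. z ^ (2 * k + 1) / of_nat (2 * k + 1)) sums artanh z"
proof -
  define f where "f = (\<lambda>n. (z ^ n - (-z) ^ n) / 2 / of_nat n)"
  have f_sums: "f sums ((Ln (1 + z) - Ln (1 - z)) / 2)"
    using sums_divide[OF sums_diff[OF Ln_series'[of z] Ln_series'[of "-z"]], of 2] assms
    by (simp add: f_def diff_divide_distrib mult.commute)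
  have f_even: "f n = 0" if "n \<notin> range (\<lambda>k. 2 * k + 1)" for n
  proof -
    have "even n" using that oddE by (metis rangeI)
    then show ?thesis by (simp add: f_def)
  qed
  have f_odd: "f (2 * k + 1) = z ^ (2 * k + 1) / of_nat (2 * k + 1)" for k
  proof -
    have "(w - - w) / 2 / d = w / d" for w d :: complex by simp
    moreover have "(-z) ^ (2 * k + 1) = - (z ^ (2 * k + 1))" by (rule power_minus_odd) simp
    ultimately show ?thesis unfolding f_def by simp
  qed
  have "strict_mono (\<lambda>k::nat. 2 * k + 1)" by (rule strict_monoI) simp
  then have "(\<lambda>k. f (2 * k + 1)) sums ((Ln (1 + z) - Ln (1 - z)) / 2)"
    using f_sums f_even by (subst sums_mono_reindex)
  then show ?thesis by (simp only: f_odd artanh_eq_Ln_diff[OF assms])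
qed

lemma artanh_series_tail:
  fixes z :: complex
  assumes "norm z < 1"
  shows "(\<lambda>k. z ^ (2 * Suc k + 1) / of_nat (2 * Suc k + 1)) sums (artanh z - z)"
  using artanh_series[OF assms] by (subst sums_Suc_iff) simp

lemma summable_power_Suc_divide:
  fixes w :: "'a::{real_normed_field, banach}"
  assumes "norm w < 1" "\<And>k. 1 \<le> norm (d k)"
  shows "summable (\<lambda>k. w ^ Suc k / d k)"
proof (rule summable_comparison_test')
  show "summable (\<lambda>k. norm w ^ k)" using assms(1) by (simp add: summable_geometric)
  show "norm (w ^ Suc k / d k) \<le> norm w ^ k" for k
  proof -
    have "norm (w ^ Suc k / d k) \<le> norm w ^ Suc k / 1"
      unfolding norm_divide norm_power by (rule divide_left_mono) (use assms(2)[of k] in auto)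
    also have "\<dots> \<le> norm w ^ k" using assms(1) by (simp add: mult_left_le_one_le)
    finally show ?thesis .
  qed
qed

lemma polylog_sums:
  assumes "norm w < 1"
  shows "(\<lambda>k. w ^ Suc k / of_nat (Suc k) ^ n) sums polylog n w"
proof -
  have "summable (\<lambda>k. w ^ Suc k / of_nat (Suc k) ^ n)"
    by (rule summable_power_Suc_divide[OF assms]) (simp add: norm_power one_le_power del: of_nat_Suc)
  then show ?thesis by (simp add: polylog_def summable_sums)
qed

lemma polylog_1:
  assumes "norm w < 1"
  shows "polylog 1 w = - Ln (1 - w)"
proof -
  have "(\<lambda>n. - (w ^ n / of_nat n)) sums Ln (1 - w)"
    using Ln_series'[of "-w"] assms by simp
  then have "(\<lambda>n. w ^ n / of_nat n) sums - Ln (1 - w)"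
    using sums_minus by fastforce
  then have "(\<lambda>k. w ^ Suc k / of_nat (Suc k)) sums - Ln (1 - w)"
    by (subst sums_Suc_iff[where f = "\<lambda>n. w ^ n / of_nat n"]) simp
  moreover have "(\<lambda>k. w ^ Suc k / of_nat (Suc k)) sums polylog 1 w"
    using polylog_sums[OF assms, of 1] by simp
  ultimately show ?thesis by (rule sums_unique2[symmetric])
qed

lemma one_div_pred_succ:
  fixes x :: "'a::field_char_0"
  assumes "x - 1 \<noteq> 0" "x + 1 \<noteq> 0"
  shows "1 / ((x - 1) * (x + 1)) = (1 / (x - 1) - 1 / (x + 1)) / 2"
  using assms by (simp add: divide_simps)

lemma one_div_pred_self_succ:
  fixes x :: "'a::field_char_0"
  assumes "x - 1 \<noteq> 0" "x \<noteq> 0" "x + 1 \<noteq> 0"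
  shows "1 / ((x - 1) * x * (x + 1)) = (1 / (x - 1) - 2 / x + 1 / (x + 1)) / 2"
  using assms by (simp add: divide_simps) (simp add: algebra_simps)

lemma one_div_pred_power_succ_add_two:
  fixes x :: "'a::field"
  assumes "x - 1 \<noteq> 0" "x \<noteq> 0" "x + 1 \<noteq> 0"
  shows "1 / ((x - 1) * x ^ (p + 2) * (x + 1)) = 1 / ((x - 1) * x ^ p * (x + 1)) - 1 / x ^ (p + 2)"
  using assms by (simp add: divide_simps) (simp add: algebra_simps)

definition F_summand :: "complex \<Rightarrow> nat \<Rightarrow> nat \<Rightarrow> complex" where
  "F_summand z p k =
     (z\<^sup>2) ^ Suc k / (of_nat (2 * k + 1) * of_nat (2 * k + 2) ^ p * of_nat (2 * k + 3))"

lemma F_eq_suminf: "F z p = (\<Sum>k. F_summand z p k)"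
proof -
  have "2 * Suc k - 1 = 2 * k + 1" "2 * Suc k = 2 * k + 2" "2 * Suc k + 1 = 2 * k + 3" for k
    by simp_all
  then show ?thesis unfolding F_def F_summand_def power_mult by (simp only:)
qed

lemma summable_F_summand:
  assumes "norm z < 1"
  shows "summable (F_summand z p)"
proof -
  have "norm (z\<^sup>2) < 1" using assms by (simp add: norm_power power_less_one_iff)
  moreover have "1 \<le> norm (of_nat (2 * k + 1) * of_nat (2 * k + 2) ^ p * of_nat (2 * k + 3) :: complex)"
    for k
    unfolding of_nat_power[symmetric] of_nat_mult[symmetric] norm_of_nat one_of_nat_le_iff
    by (simp add: Suc_le_eq)
  ultimately show ?thesis
    unfolding F_summand_def[abs_def] by (rule summable_power_Suc_divide)
qed

lemma F_summand_add_two: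
  "F_summand z (p + 2) k = F_summand z p k - (z\<^sup>2) ^ Suc k / of_nat (Suc k) ^ (p + 2) / 2 ^ (p + 2)"
proof -
  define x :: complex where "x = of_nat (2 * k + 2)"
  have pred: "of_nat (2 * k + 1) = x - 1" and succ: "of_nat (2 * k + 3) = x + 1"
    unfolding x_def by simp_all
  have x: "x - 1 \<noteq> 0" "x \<noteq> 0" "x + 1 \<noteq> 0"
    unfolding pred[symmetric] succ[symmetric] by (simp_all only: x_def of_nat_eq_0_iff)
  have x_power: "x ^ (p + 2) = 2 ^ (p + 2) * of_nat (Suc k) ^ (p + 2)"
  proof -
    have "x = 2 * of_nat (Suc k)" unfolding x_def by simp
    then show ?thesis by (simp only: power_mult_distrib)
  qed
  have "F_summand z (p + 2) k = (z\<^sup>2) ^ Suc k * (1 / ((x - 1) * x ^ (p + 2) * (x + 1)))"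
    unfolding F_summand_def pred succ x_def[symmetric] by simp
  also have "\<dots> = (z\<^sup>2) ^ Suc k * (1 / ((x - 1) * x ^ p * (x + 1)) - 1 / x ^ (p + 2))"
    by (simp only: one_div_pred_power_succ_add_two[OF x])
  also have "\<dots> = F_summand z p k - (z\<^sup>2) ^ Suc k / x ^ (p + 2)"
    unfolding F_summand_def pred succ x_def[symmetric] by (simp add: right_diff_distrib)
  finally show ?thesis by (simp only: x_power divide_divide_eq_left mult.commute)
qed

lemma F_add_two:
  assumes "norm z < 1"
  shows "F z (p + 2) = F z p - polylog (p + 2) (z\<^sup>2) / 2 ^ (p + 2)"
proof -
  have "norm (z\<^sup>2) < 1" using assms by (simp add: norm_power power_less_one_iff)
  then have "(\<lambda>k. F_summand z p k - (z\<^sup>2) ^ Suc k / of_nat (Suc k) ^ (p + 2) / 2 ^ (p + 2))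
               sums (F z p - polylog (p + 2) (z\<^sup>2) / 2 ^ (p + 2))"
    unfolding F_eq_suminf[of z p]
    by (intro sums_diff sums_divide summable_sums summable_F_summand polylog_sums assms)
  then show ?thesis unfolding F_summand_add_two[symmetric] F_eq_suminf[of z "p + 2"]
    by (rule sums_unique[symmetric])
qed

lemma F_add_even:
  assumes "norm z < 1"
  shows "F z (q + 2 * m) = F z q - (\<Sum>j=1..m. polylog (q + 2 * j) (z\<^sup>2) / 2 ^ (q + 2 * j))"
proof (induction m)
  case 0
  show ?case by simp
next
  case (Suc m)
  have "q + 2 * Suc m = (q + 2 * m) + 2" by simp
  then show ?case using F_add_two[OF assms, of "q + 2 * m"] Suc.IH by simp
qed

lemma F_summand_partial_fractions:
  assumes "z \<noteq> 0"
  defines "a \<equiv> \<lambda>k. z ^ (2 * k + 1) / of_nat (2 * k + 1)"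
  shows "F_summand z 0 k = (z * a k - a (Suc k) / z) / 2"
    and "F_summand z 1 k = (z * a k - (z\<^sup>2) ^ Suc k / of_nat (Suc k) + a (Suc k) / z) / 2"
proof -
  define w where "w = (z\<^sup>2) ^ Suc k"
  define x :: complex where "x = of_nat (2 * k + 2)"
  have pred: "of_nat (2 * k + 1) = x - 1" and succ: "of_nat (2 * k + 3) = x + 1"
    unfolding x_def by simp_all
  have x: "x - 1 \<noteq> 0" "x \<noteq> 0" "x + 1 \<noteq> 0"
    unfolding pred[symmetric] succ[symmetric] by (simp_all only: x_def of_nat_eq_0_iff)
  have left: "w / (x - 1) = z * a k"
    unfolding w_def a_def pred by (simp add: power_mult power2_eq_square)
  have right: "w / (x + 1) = a (Suc k) / z"
  proof -
    have k: "2 * Suc k + 1 = 2 * k + 3" by simp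
    have "z ^ (2 * k + 3) = w * z"
      unfolding w_def by (simp add: power_add power_mult power2_eq_square power3_eq_cube)
    then show ?thesis unfolding a_def k succ using assms(1) by simp
  qed
  have middle: "2 * w / x = w / of_nat (Suc k)"
  proof -
    have "x = 2 * of_nat (Suc k)" unfolding x_def by simp
    then show ?thesis by (simp del: of_nat_Suc)
  qed
  have "F_summand z 0 k = w * (1 / ((x - 1) * (x + 1)))"
    unfolding F_summand_def pred succ w_def by simp
  also have "\<dots> = (w / (x - 1) - w / (x + 1)) / 2"
    by (simp add: one_div_pred_succ[OF x(1,3)] right_diff_distrib)
  also have "\<dots> = (z * a k - a (Suc k) / z) / 2"
    unfolding left right ..
  finally show "F_summand z 0 k = (z * a k - a (Suc k) / z) / 2" .
  have "F_summand z 1 k = w * (1 / ((x - 1) * x * (x + 1)))"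
    unfolding F_summand_def pred succ w_def x_def by simp
  also have "\<dots> = (w / (x - 1) - 2 * w / x + w / (x + 1)) / 2"
    by (simp only: one_div_pred_self_succ[OF x]) (simp add: algebra_simps)
  also have "\<dots> = (z * a k - w / of_nat (Suc k) + a (Suc k) / z) / 2"
    unfolding left middle right ..
  finally show "F_summand z 1 k = (z * a k - (z\<^sup>2) ^ Suc k / of_nat (Suc k) + a (Suc k) / z) / 2"
    unfolding w_def .
qed

lemma F_0:
  assumes "norm z < 1" "z \<noteq> 0"
  shows "F z 0 = ((z - 1 / z) * artanh z + 1) / 2"
proof -
  have "F_summand z 0 sums ((z * artanh z - (artanh z - z) / z) / 2)"
    unfolding F_summand_partial_fractions(1)[OF assms(2), abs_def]
    by (intro sums_divide sums_diff sums_mult artanh_series artanh_series_tail assms(1))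
  then have "F z 0 = (z * artanh z - (artanh z - z) / z) / 2"
    unfolding F_eq_suminf by (rule sums_unique[symmetric])
  then show ?thesis using assms(2) by (simp add: field_simps)
qed

lemma F_1:
  assumes "norm z < 1" "z \<noteq> 0"
  shows "F z 1 = ((z + 1 / z) * artanh z - 1 + Ln (1 - z\<^sup>2)) / 2"
proof -
  have "norm (z\<^sup>2) < 1" using assms by (simp add: norm_power power_less_one_iff)
  then have "(\<lambda>k. (z\<^sup>2) ^ Suc k / of_nat (Suc k)) sums - Ln (1 - z\<^sup>2)"
    using polylog_sums[of "z\<^sup>2" 1] polylog_1 by simp
  then have "F_summand z 1 sums ((z * artanh z - - Ln (1 - z\<^sup>2) + (artanh z - z) / z) / 2)"
    unfolding F_summand_partial_fractions(2)[OF assms(2), abs_def]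
    by (intro sums_divide sums_add sums_diff sums_mult artanh_series artanh_series_tail assms(1))
  then have "F z 1 = (z * artanh z - - Ln (1 - z\<^sup>2) + (artanh z - z) / z) / 2"
    unfolding F_eq_suminf by (rule sums_unique[symmetric])
  then show ?thesis using assms(2) by (simp add: field_simps)
qed

theorem theorem1:
  fixes z :: complex and p :: nat
  assumes "0 < norm z" and "norm z < 1"
  shows "(even p \<longrightarrow>
           F z p = ((z - 1 / z) * artanh z + 1
                    - (\<Sum>j=1..p div 2. polylog (2 * j) (z\<^sup>2) / 2 ^ (2 * j - 1))) / 2)
       \<and> (odd p \<longrightarrow>
           F z p = ((z + 1 / z) * artanh z - 1 + ln (1 - z\<^sup>2)
                    - (\<Sum>j=1..(p - 1) div 2. polylog (2 * j + 1) (z\<^sup>2) / 2 ^ (2 * j))) / 2)"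
proof -
  have z: "z \<noteq> 0" using assms(1) by auto
  show ?thesis
  proof (intro conjI impI)
    assume "even p"
    then have p: "p = 0 + 2 * (p div 2)" by simp
    have "(\<Sum>j=1..p div 2. polylog (2 * j) (z\<^sup>2) / 2 ^ (2 * j - 1)) / 2
          = (\<Sum>j=1..p div 2. polylog (0 + 2 * j) (z\<^sup>2) / 2 ^ (0 + 2 * j))"
      unfolding sum_divide_distrib
      by (rule sum.cong) (auto simp: divide_divide_eq_left simp flip: power_Suc2)
    then show "F z p = ((z - 1 / z) * artanh z + 1
                    - (\<Sum>j=1..p div 2. polylog (2 * j) (z\<^sup>2) / 2 ^ (2 * j - 1))) / 2"
      using F_add_even[OF assms(2), of 0 "p div 2"] F_0[OF assms(2) z] p
      by (simp add: diff_divide_distrib)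
  next
    assume "odd p"
    then have p: "p = 1 + 2 * ((p - 1) div 2)" by simp
    have "(\<Sum>j=1..(p - 1) div 2. polylog (2 * j + 1) (z\<^sup>2) / 2 ^ (2 * j)) / 2
          = (\<Sum>j=1..(p - 1) div 2. polylog (1 + 2 * j) (z\<^sup>2) / 2 ^ (1 + 2 * j))"
      unfolding sum_divide_distrib by (simp add: divide_divide_eq_left mult.commute)
    then show "F z p = ((z + 1 / z) * artanh z - 1 + ln (1 - z\<^sup>2)
                    - (\<Sum>j=1..(p - 1) div 2. polylog (2 * j + 1) (z\<^sup>2) / 2 ^ (2 * j))) / 2"
      using F_add_even[OF assms(2), of 1 "(p - 1) div 2"] F_1[OF assms(2) z] p
      by (simp add: diff_divide_distrib)
  qed
qed

end
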